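(* Let $\mathcal{R}$ be a left-linear TRS and suppose $s$ strongly $p$-converges to $t$ in $\mathcal{R}$. Then there is a term $t'$ with $t\le_\bot t'$ such that $s$ weakly $p$-converges to $t'$ in $\mathcal{R}$.
   Context: Partial terms over $\Sigma_\bot=\Sigma\uplus\{\bot\}$ ordered by $\le_\bot$ ($s\le_\bot t$ iff $s$ is $t$ with some subterms replaced by $\bot$) form a complete semilattice; $\liminf_{\iota\to\alpha}a_\iota=\bigvee_{\beta<\alpha}\bigwedge_{\beta\le\iota<\alpha}a_\iota$. For a reduction $S=(t_\iota\to_{\pi_\iota}t_{\iota+1})_{\iota<\alpha}$: it weakly $p$-converges to $t$ if $\liminf_{\iota\to\lambda}t_\iota=t_\lambda$ for every limit $\lambda<\alpha$ and $t=\liminf_{\iota\to\hat\alpha}t_\iota$ ($\hat\alpha=\alpha+1$ if closed, so $t$ is the last term, $\hat\alpha=\alpha$ if open). With contexts $c_\iota$ ($t_\iota$ with position $\pi_\iota$ replaced by $\bot$), it strongly $p$-converges to $t$ if $\liminf_{\iota\to\lambda}c_\iota=t_\lambda$ for every limit $\lambda<\alpha$ and $t$ is the last term (closed) or $t=\liminf_{\iota\to\alpha}c_\iota$ (open). *)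

theory Defs
  imports Main
begin

text \<open>Possibly infinite partial terms over an (unranked) signature extended by
  the constant Bot, with variables.\<close>
codatatype ('f, 'v) pterm = PVar 'v | PFun 'f "('f, 'v) pterm list" | PBot

type_synonym pos = "nat list"

coinductive le_bot :: "('f, 'v) pterm \<Rightarrow> ('f, 'v) pterm \<Rightarrow> bool" where
  le_bot_Bot: "le_bot PBot t"
| le_bot_Var: "le_bot (PVar x) (PVar x)"
| le_bot_Fun: "list_all2 le_bot ss ts \<Longrightarrow> le_bot (PFun f ss) (PFun f ts)"

primrec subt :: "('f, 'v) pterm \<Rightarrow> pos \<Rightarrow> ('f, 'v) pterm option" where
  "subt t [] = Some t"
| "subt t (i # p) = (case t of
      PFun f ts \<Rightarrow> (if i < length ts then subt (ts ! i) p else None)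
    | _ \<Rightarrow> None)"

primrec repl :: "('f, 'v) pterm \<Rightarrow> pos \<Rightarrow> ('f, 'v) pterm \<Rightarrow> ('f, 'v) pterm" where
  "repl t [] u = u"
| "repl t (i # p) u = (case t of
      PFun f ts \<Rightarrow> (if i < length ts then PFun f (ts[i := repl (ts ! i) p u]) else t)
    | _ \<Rightarrow> t)"

coinductive inst :: "('v \<Rightarrow> ('f, 'v) pterm) \<Rightarrow> ('f, 'v) pterm \<Rightarrow> ('f, 'v) pterm \<Rightarrow> bool"
  for \<sigma> where
  inst_Var: "inst \<sigma> (PVar x) (\<sigma> x)"
| inst_Fun: "list_all2 (inst \<sigma>) ls us \<Longrightarrow> inst \<sigma> (PFun f ls) (PFun f us)"

definition vars :: "('f, 'v) pterm \<Rightarrow> 'v set" where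
  "vars t = {x. \<exists>p. subt t p = Some (PVar x)}"

definition bot_free :: "('f, 'v) pterm \<Rightarrow> bool" where
  "bot_free t \<longleftrightarrow> (\<forall>p. subt t p \<noteq> Some PBot)"

definition linear :: "('f, 'v) pterm \<Rightarrow> bool" where
  "linear t \<longleftrightarrow> (\<forall>x p q. subt t p = Some (PVar x) \<longrightarrow> subt t q = Some (PVar x) \<longrightarrow> p = q)"

definition trs :: "(('f, 'v) pterm \<times> ('f, 'v) pterm) set \<Rightarrow> bool" where
  "trs R \<longleftrightarrow> (\<forall>(l, r) \<in> R. bot_free l \<and> bot_free r \<and> (\<forall>x. l \<noteq> PVar x) \<and> vars r \<subseteq> vars l)"

definition left_linear :: "(('f, 'v) pterm \<times> ('f, 'v) pterm) set \<Rightarrow> bool" where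
  "left_linear R \<longleftrightarrow> (\<forall>(l, r) \<in> R. linear l)"

definition rstep :: "(('f, 'v) pterm \<times> ('f, 'v) pterm) set \<Rightarrow> ('f, 'v) pterm \<Rightarrow> pos \<Rightarrow> ('f, 'v) pterm \<Rightarrow> bool" where
  "rstep R t \<pi> t' \<longleftrightarrow> (\<exists>(l, r) \<in> R. \<exists>\<sigma> u v.
     subt t \<pi> = Some u \<and> inst \<sigma> l u \<and> inst \<sigma> r v \<and> t' = repl t \<pi> v)"

definition glb :: "('f, 'v) pterm set \<Rightarrow> ('f, 'v) pterm" where
  "glb A = (THE x. (\<forall>a\<in>A. le_bot x a) \<and> (\<forall>y. (\<forall>a\<in>A. le_bot y a) \<longrightarrow> le_bot y x))"

definition lub :: "('f, 'v) pterm set \<Rightarrow> ('f, 'v) pterm" where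
  "lub A = (THE x. (\<forall>a\<in>A. le_bot a x) \<and> (\<forall>y. (\<forall>a\<in>A. le_bot a y) \<longrightarrow> le_bot x y))"

text \<open>Ordinals are represented by elements of a well-ordered index type.\<close>
definition idx0 :: "'i::wellorder" where
  "idx0 = (LEAST i. True)"

definition isucc :: "'i::wellorder \<Rightarrow> 'i" where
  "isucc i = (LEAST j. i < j)"

definition is_limit :: "'i::wellorder \<Rightarrow> bool" where
  "is_limit l \<longleftrightarrow> l \<noteq> idx0 \<and> (\<forall>b<l. \<exists>c. b < c \<and> c < l)"

definition liminf_at :: "('i::wellorder \<Rightarrow> ('f, 'v) pterm) \<Rightarrow> 'i \<Rightarrow> ('f, 'v) pterm" where
  "liminf_at a l = lub {glb {a i | i. b \<le> i \<and> i < l} | b. b < l}"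

definition reduction :: "(('f, 'v) pterm \<times> ('f, 'v) pterm) set \<Rightarrow> 'i::wellorder \<Rightarrow>
    ('i \<Rightarrow> ('f, 'v) pterm) \<Rightarrow> ('i \<Rightarrow> pos) \<Rightarrow> bool" where
  "reduction R \<alpha> ts ps \<longleftrightarrow> (\<forall>i<\<alpha>. rstep R (ts i) (ps i) (ts (isucc i)))"

text \<open>The reduction is closed iff alpha is not a limit ordinal (zero or successor);
  then the final term is ts alpha.\<close>
definition weak_conv :: "'i::wellorder \<Rightarrow> ('i \<Rightarrow> ('f, 'v) pterm) \<Rightarrow> ('f, 'v) pterm \<Rightarrow> bool" where
  "weak_conv \<alpha> ts t \<longleftrightarrow>
     (\<forall>l<\<alpha>. is_limit l \<longrightarrow> liminf_at ts l = ts l) \<and>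
     t = (if is_limit \<alpha> then liminf_at ts \<alpha> else ts \<alpha>)"

definition strong_conv :: "'i::wellorder \<Rightarrow> ('i \<Rightarrow> ('f, 'v) pterm) \<Rightarrow> ('i \<Rightarrow> pos) \<Rightarrow> ('f, 'v) pterm \<Rightarrow> bool" where
  "strong_conv \<alpha> ts ps t \<longleftrightarrow>
     (\<forall>l<\<alpha>. is_limit l \<longrightarrow> liminf_at (\<lambda>i. repl (ts i) (ps i) PBot) l = ts l) \<and>
     t = (if is_limit \<alpha> then liminf_at (\<lambda>i. repl (ts i) (ps i) PBot) \<alpha> else ts \<alpha>)"

definition weakly_p_converges :: "(('f, 'v) pterm \<times> ('f, 'v) pterm) set \<Rightarrow> 'i::wellorder itself \<Rightarrow>
    ('f, 'v) pterm \<Rightarrow> ('f, 'v) pterm \<Rightarrow> bool" where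
  "weakly_p_converges R _ s t \<longleftrightarrow>
     (\<exists>(\<alpha>::'i) ts ps. reduction R \<alpha> ts ps \<and> ts idx0 = s \<and> weak_conv \<alpha> ts t)"

definition strongly_p_converges :: "(('f, 'v) pterm \<times> ('f, 'v) pterm) set \<Rightarrow> 'i::wellorder itself \<Rightarrow>
    ('f, 'v) pterm \<Rightarrow> ('f, 'v) pterm \<Rightarrow> bool" where
  "strongly_p_converges R _ s t \<longleftrightarrow>
     (\<exists>(\<alpha>::'i) ts ps. reduction R \<alpha> ts ps \<and> ts idx0 = s \<and> strong_conv \<alpha> ts ps t)"

end

theory Submission
  imports Defs
begin

text \<open>Since the left-hand sides are linear, a redex stays a redex when some of its
  \<open>\<bottom>\<close>-subterms are replaced by larger terms, and the contracted term grows accordingly.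
  Thus every step of the given reduction can be lifted to a step from any larger term
  at the same position. Lifting step by step, and taking limits inferior at limit
  ordinals, yields a reduction that is weakly continuous by construction and stays
  above the original one: at a limit ordinal the original term is the limit inferior of
  the contexts, which lie below the terms of the original reduction, hence below the
  lifted ones.\<close>

lemma le_bot_refl: "le_bot t t"
proof (coinduction arbitrary: t rule: le_bot.coinduct)
  case le_bot
  then show ?case
    by (cases t) (auto simp: list.rel_refl)
qed

lemma le_bot_Bot_iff [simp]: "le_bot t PBot \<longleftrightarrow> t = PBot"
  by (auto elim: le_bot.cases intro: le_bot.intros)

lemma le_bot_Var_iff [simp]: "le_bot (PVar x) t \<longleftrightarrow> t = PVar x"
  by (auto elim: le_bot.cases intro: le_bot.intros)

lemma le_bot_Fun_iff: "le_bot (PFun f ss) t \<longleftrightarrow> (\<exists>ts. t = PFun f ts \<and> list_all2 le_bot ss ts)"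
  by (auto elim: le_bot.cases intro: le_bot.intros)

lemma le_bot_trans [trans]: "le_bot a b \<Longrightarrow> le_bot b c \<Longrightarrow> le_bot a c"
proof (coinduction arbitrary: a b c rule: le_bot.coinduct)
  case (le_bot a b c)
  show ?case
  proof (cases a)
    case (PFun f ss)
    then obtain ts where b: "b = PFun f ts" "list_all2 le_bot ss ts"
      using le_bot by (auto simp: le_bot_Fun_iff)
    then obtain us where c: "c = PFun f us" "list_all2 le_bot ts us"
      using le_bot by (auto simp: le_bot_Fun_iff)
    have "list_all2 (\<lambda>x z. \<exists>y. le_bot x y \<and> le_bot y z) ss us"
      using b(2) c(2) by (auto simp: list_all2_conv_all_nth) (metis nth_mem)
    then show ?thesis using PFun b c by (auto elim: list_all2_mono)
  qed (use le_bot in auto)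
qed

lemma le_bot_antisym: "le_bot a b \<Longrightarrow> le_bot b a \<Longrightarrow> a = b"
proof (coinduction arbitrary: a b rule: pterm.coinduct)
  case (Eq_pterm a b)
  show ?case
  proof (cases a)
    case (PFun f ss)
    then obtain ts where b: "b = PFun f ts" "list_all2 le_bot ss ts"
      using Eq_pterm by (auto simp: le_bot_Fun_iff)
    then have "list_all2 le_bot ts ss" using Eq_pterm PFun by (auto simp: le_bot_Fun_iff)
    then show ?thesis using PFun b by (auto simp: list_all2_conv_all_nth)
  qed (use Eq_pterm in auto)
qed

text \<open>\<open>glb\<close> and \<open>lub\<close> are defined by \<open>THE\<close>, so greatest lower bounds of nonempty sets and
  least upper bounds of chains are exhibited explicitly, by corecursion over argument positions.\<close>
definition args_at :: "('f, 'v) pterm set \<Rightarrow> nat \<Rightarrow> ('f, 'v) pterm set" where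
  "args_at A i = {ts ! i | f ts. PFun f ts \<in> A \<and> i < length ts}"

lemma args_atI: "PFun f ts \<in> A \<Longrightarrow> i < length ts \<Longrightarrow> ts ! i \<in> args_at A i"
  unfolding args_at_def by (intro CollectI exI[of _ f] exI[of _ ts]) simp

primcorec glb_corec :: "('f, 'v) pterm set \<Rightarrow> ('f, 'v) pterm" where
  "glb_corec A = (if A \<noteq> {} \<and> (\<exists>v. A = {PVar v}) then PVar (SOME v. A = {PVar v})
     else if A \<noteq> {} \<and> (\<exists>f n. \<forall>a\<in>A. \<exists>ts. a = PFun f ts \<and> length ts = n)
     then PFun (fst (SOME (f, n). \<forall>a\<in>A. \<exists>ts. a = PFun f ts \<and> length ts = n))
        (map (\<lambda>i. glb_corec (args_at A i))
          [0..<snd (SOME (f, n). \<forall>a\<in>A. \<exists>ts. a = PFun f ts \<and> length ts = n)])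
     else PBot)"

lemma glb_corec_Fun:
  assumes "a \<in> A" and "\<forall>a\<in>A. \<exists>ts. a = PFun f ts \<and> length ts = n"
  shows "glb_corec A = PFun f (map (\<lambda>i. glb_corec (args_at A i)) [0..<n])"
proof -
  define fn where "fn = (SOME (f, n). \<forall>a\<in>A. \<exists>ts. a = PFun f ts \<and> length ts = n)"
  have "\<exists>p. (\<lambda>(f, n). \<forall>a\<in>A. \<exists>ts. a = PFun f ts \<and> length ts = n) p"
    using assms(2) by auto
  from someI_ex[OF this] have "\<forall>a\<in>A. \<exists>ts. a = PFun (fst fn) ts \<and> length ts = snd fn"
    unfolding fn_def by (simp add: case_prod_unfold)
  then have "fst fn = f" "snd fn = n"
    using assms by fastforce+
  moreover have "\<not> (\<exists>v. A = {PVar v})"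
    using assms by force
  ultimately show ?thesis
    using assms unfolding fn_def by (subst glb_corec.code) auto
qed

lemma glb_corec_lower: "a \<in> A \<Longrightarrow> le_bot (glb_corec A) a"
proof (coinduction arbitrary: a A rule: le_bot.coinduct)
  case (le_bot a A)
  consider (var) v where "A = {PVar v}"
    | (fn) f n where "\<forall>a\<in>A. \<exists>ts. a = PFun f ts \<and> length ts = n"
    | (bot) "glb_corec A = PBot"
    using glb_corec.code[of A] by (auto split: if_splits)
  then show ?case
  proof cases
    case (fn f n)
    then obtain ts where a: "a = PFun f ts" "length ts = n" using le_bot by blast
    have "list_all2 (\<lambda>x y. \<exists>a A. x = glb_corec A \<and> y = a \<and> a \<in> A)
        (map (\<lambda>i. glb_corec (args_at A i)) [0..<n]) ts"
      using a le_bot by (auto simp: list_all2_conv_all_nth args_at_def)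
    then show ?thesis
      using glb_corec_Fun[OF le_bot fn] a by (auto elim: list_all2_mono)
  next
    case (var v)
    then have "glb_corec A = PVar v" by (subst glb_corec.code) auto
    then show ?thesis using var le_bot by auto
  qed simp
qed

lemma glb_corec_greatest: "A \<noteq> {} \<Longrightarrow> \<forall>a\<in>A. le_bot y a \<Longrightarrow> le_bot y (glb_corec A)"
proof (coinduction arbitrary: y A rule: le_bot.coinduct)
  case (le_bot y A)
  show ?case
  proof (cases y)
    case (PVar v)
    then have "A = {PVar v}" using le_bot by auto
    then have "glb_corec A = PVar v" by (subst glb_corec.code) auto
    then show ?thesis using PVar by simp
  next
    case (PFun f ys)
    have all: "\<forall>a\<in>A. \<exists>ts. a = PFun f ts \<and> list_all2 le_bot ys ts"
      using le_bot PFun by (auto simp: le_bot_Fun_iff)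
    then have shape: "\<forall>a\<in>A. \<exists>ts. a = PFun f ts \<and> length ts = length ys"
      by (metis list_all2_lengthD)
    obtain a where "a \<in> A" using le_bot by auto
    have "list_all2 (\<lambda>y x. \<exists>y' A'. y = y' \<and> x = glb_corec A' \<and> A' \<noteq> {} \<and> (\<forall>a\<in>A'. le_bot y' a))
        ys (map (\<lambda>i. glb_corec (args_at A i)) [0..<length ys])"
    proof (rule list_all2_all_nthI)
      fix i assume i: "i < length ys"
      obtain ts where "a = PFun f ts" "length ts = length ys" using shape \<open>a \<in> A\<close> by blast
      then have "ts ! i \<in> args_at A i" using \<open>a \<in> A\<close> i by (simp add: args_atI)
      then have "args_at A i \<noteq> {}" by blast
      moreover have "\<forall>b\<in>args_at A i. le_bot (ys ! i) b"
        using all i unfolding args_at_def by (auto simp: list_all2_conv_all_nth)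
      ultimately show "\<exists>y' A'. ys ! i = y' \<and> map (\<lambda>i. glb_corec (args_at A i)) [0..<length ys] ! i = glb_corec A'
          \<and> A' \<noteq> {} \<and> (\<forall>a\<in>A'. le_bot y' a)"
        using i by (intro exI[of _ "ys ! i"] exI[of _ "args_at A i"]) simp
    qed simp
    then show ?thesis
      using PFun glb_corec_Fun[OF \<open>a \<in> A\<close> shape] by (auto elim!: list_all2_mono)
  qed blast
qed

lemma glb_eq_glb_corec: "A \<noteq> {} \<Longrightarrow> glb A = glb_corec A"
  unfolding glb_def
proof (rule the_equality)
  assume "A \<noteq> {}"
  then show "(\<forall>a\<in>A. le_bot (glb_corec A) a) \<and> (\<forall>y. (\<forall>a\<in>A. le_bot y a) \<longrightarrow> le_bot y (glb_corec A))"
    using glb_corec_lower glb_corec_greatest by blast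
  fix x assume x: "(\<forall>a\<in>A. le_bot x a) \<and> (\<forall>y. (\<forall>a\<in>A. le_bot y a) \<longrightarrow> le_bot y x)"
  have "le_bot x (glb_corec A)" using x glb_corec_greatest[OF \<open>A \<noteq> {}\<close>] by blast
  moreover have "le_bot (glb_corec A) x" using x glb_corec_lower by blast
  ultimately show "x = glb_corec A" by (rule le_bot_antisym)
qed

lemma glb_lower: "a \<in> A \<Longrightarrow> le_bot (glb A) a"
  by (metis empty_iff glb_corec_lower glb_eq_glb_corec)

lemma glb_greatest: "A \<noteq> {} \<Longrightarrow> \<forall>a\<in>A. le_bot y a \<Longrightarrow> le_bot y (glb A)"
  by (simp add: glb_corec_greatest glb_eq_glb_corec)


definition le_bot_chain :: "('f, 'v) pterm set \<Rightarrow> bool" where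
  "le_bot_chain C \<longleftrightarrow> (\<forall>x\<in>C. \<forall>y\<in>C. le_bot x y \<or> le_bot y x)"

lemma le_bot_chain_args_at: "le_bot_chain C \<Longrightarrow> le_bot_chain (args_at C i)"
  unfolding le_bot_chain_def args_at_def
proof clarsimp
  fix f ts g us
  assume "\<forall>x\<in>C. \<forall>y\<in>C. le_bot x y \<or> le_bot y x" "PFun f ts \<in> C" "PFun g us \<in> C"
    and i: "i < length ts" "i < length us" and "\<not> le_bot (us ! i) (ts ! i)"
  then have "le_bot (PFun f ts) (PFun g us) \<or> le_bot (PFun g us) (PFun f ts)" by blast
  then show "le_bot (ts ! i) (us ! i)"
    using i \<open>\<not> le_bot (us ! i) (ts ! i)\<close> by (auto simp: le_bot_Fun_iff list_all2_conv_all_nth)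
qed

primcorec lub_corec :: "('f, 'v) pterm set \<Rightarrow> ('f, 'v) pterm" where
  "lub_corec C = (if \<exists>v. PVar v \<in> C then PVar (SOME v. PVar v \<in> C)
     else if \<exists>f ts. PFun f ts \<in> C
     then PFun (fst (SOME (f, ts). PFun f ts \<in> C))
        (map (\<lambda>i. lub_corec (args_at C i)) [0..<length (snd (SOME (f, ts). PFun f ts \<in> C))])
     else PBot)"

lemma lub_corec_Var: "le_bot_chain C \<Longrightarrow> PVar v \<in> C \<Longrightarrow> lub_corec C = PVar v"
proof -
  assume C: "le_bot_chain C" and v: "PVar v \<in> C"
  have "PVar (SOME v. PVar v \<in> C) \<in> C" using v by (metis someI)
  then have "(SOME v. PVar v \<in> C) = v" using C v unfolding le_bot_chain_def by force
  then show ?thesis using v by (subst lub_corec.code) auto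
qed

lemma lub_corec_Fun: "le_bot_chain C \<Longrightarrow> PFun f ts \<in> C \<Longrightarrow>
   lub_corec C = PFun f (map (\<lambda>i. lub_corec (args_at C i)) [0..<length ts])"
proof -
  assume C: "le_bot_chain C" and v: "PFun f ts \<in> C"
  have no_var: "\<not> (\<exists>v. PVar v \<in> C)"
    using C v unfolding le_bot_chain_def by (force simp: le_bot_Fun_iff)
  define p where "p = (SOME (f, ts). PFun f ts \<in> C)"
  have "\<exists>p. (\<lambda>(f, ts). PFun f ts \<in> C) p" using v by auto
  from someI_ex[OF this] have "PFun (fst p) (snd p) \<in> C"
    unfolding p_def by (simp add: case_prod_unfold)
  then have "fst p = f \<and> length (snd p) = length ts"
    using C v unfolding le_bot_chain_def by (force simp: le_bot_Fun_iff dest: list_all2_lengthD)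
  then show ?thesis using no_var v unfolding p_def by (subst lub_corec.code) auto
qed

lemma lub_corec_upper: "le_bot_chain C \<Longrightarrow> x \<in> C \<Longrightarrow> le_bot x (lub_corec C)"
proof (coinduction arbitrary: x C rule: le_bot.coinduct)
  case (le_bot x C)
  show ?case
  proof (cases x)
    case (PVar v) then show ?thesis using lub_corec_Var[OF le_bot(1)] le_bot(2) by simp
  next
    case (PFun f ts)
    have "list_all2 (\<lambda>x y. \<exists>x' C'. x = x' \<and> y = lub_corec C' \<and> le_bot_chain C' \<and> x' \<in> C')
        ts (map (\<lambda>i. lub_corec (args_at C i)) [0..<length ts])"
    proof (rule list_all2_all_nthI)
      fix i assume i: "i < length ts"
      then have "ts ! i \<in> args_at C i" using le_bot PFun by (simp add: args_atI)
      then show "\<exists>x' C'. ts ! i = x' \<and> map (\<lambda>i. lub_corec (args_at C i)) [0..<length ts] ! i = lub_corec C'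
          \<and> le_bot_chain C' \<and> x' \<in> C'"
        using i le_bot_chain_args_at[OF le_bot(1)] by (intro exI[of _ "ts ! i"] exI[of _ "args_at C i"]) simp
    qed simp
    moreover have "lub_corec C = PFun f (map (\<lambda>i. lub_corec (args_at C i)) [0..<length ts])"
      using lub_corec_Fun[OF le_bot(1)] le_bot(2) PFun by simp
    ultimately show ?thesis using PFun by (auto elim!: list_all2_mono)
  qed blast
qed

lemma args_at_le_bot_arg:
  assumes "\<forall>c\<in>C. le_bot c (PFun f ys)"
  shows "\<forall>c\<in>args_at C i. le_bot c (ys ! i)"
proof
  fix c assume "c \<in> args_at C i"
  then obtain g us where c: "c = us ! i" "PFun g us \<in> C" "i < length us"
    unfolding args_at_def by blast
  then have "list_all2 le_bot us ys" using assms by (auto simp: le_bot_Fun_iff)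
  then show "le_bot c (ys ! i)" using c by (auto simp: list_all2_conv_all_nth)
qed

lemma lub_corec_least: "le_bot_chain C \<Longrightarrow> \<forall>c\<in>C. le_bot c y \<Longrightarrow> le_bot (lub_corec C) y"
proof (coinduction arbitrary: y C rule: le_bot.coinduct)
  case (le_bot y C)
  show ?case
  proof (cases "\<exists>v. PVar v \<in> C")
    case True
    then obtain v where v: "PVar v \<in> C" by blast
    then have "y = PVar v" using le_bot(2) by auto
    then show ?thesis using lub_corec_Var[OF le_bot(1) v] by simp
  next
    case no_var: False
    show ?thesis
    proof (cases "\<exists>f ts. PFun f ts \<in> C")
      case True
      then obtain f ts where fn: "PFun f ts \<in> C" by blast
      then have "le_bot (PFun f ts) y" using le_bot(2) by blast
      then obtain ys where ys: "y = PFun f ys" "list_all2 le_bot ts ys"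
        unfolding le_bot_Fun_iff by blast
      have "list_all2 (\<lambda>x y. \<exists>y' C'. y = y' \<and> x = lub_corec C' \<and> le_bot_chain C' \<and> (\<forall>c\<in>C'. le_bot c y'))
          (map (\<lambda>i. lub_corec (args_at C i)) [0..<length ts]) ys"
      proof (rule list_all2_all_nthI)
        fix i assume "i < length (map (\<lambda>i. lub_corec (args_at C i)) [0..<length ts])"
        then have "map (\<lambda>i. lub_corec (args_at C i)) [0..<length ts] ! i = lub_corec (args_at C i)"
          by simp
        moreover have "\<forall>c\<in>args_at C i. le_bot c (ys ! i)"
          by (rule args_at_le_bot_arg[where f = f]) (use le_bot(2) ys(1) in simp)
        ultimately show "\<exists>y' C'. ys ! i = y' \<and> map (\<lambda>i. lub_corec (args_at C i)) [0..<length ts] ! i = lub_corec C'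
            \<and> le_bot_chain C' \<and> (\<forall>c\<in>C'. le_bot c y')"
          using le_bot_chain_args_at[OF le_bot(1)] by (intro exI[of _ "ys ! i"] exI[of _ "args_at C i"]) simp
      qed (use ys(2) in \<open>simp add: list_all2_lengthD\<close>)
      moreover have "lub_corec C = PFun f (map (\<lambda>i. lub_corec (args_at C i)) [0..<length ts])"
        using lub_corec_Fun[OF le_bot(1) fn] .
      ultimately show ?thesis using ys(1) by (auto elim!: list_all2_mono)
    next
      case False
      then have "lub_corec C = PBot" using no_var by (subst lub_corec.code) auto
      then show ?thesis by simp
    qed
  qed
qed

lemma lub_eq_lub_corec: "le_bot_chain C \<Longrightarrow> lub C = lub_corec C"
  unfolding lub_def
proof (rule the_equality)
  assume "le_bot_chain C"
  then show "(\<forall>a\<in>C. le_bot a (lub_corec C)) \<and> (\<forall>y. (\<forall>a\<in>C. le_bot a y) \<longrightarrow> le_bot (lub_corec C) y)"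
    using lub_corec_upper lub_corec_least by blast
  fix x assume x: "(\<forall>a\<in>C. le_bot a x) \<and> (\<forall>y. (\<forall>a\<in>C. le_bot a y) \<longrightarrow> le_bot x y)"
  have "le_bot x (lub_corec C)" using x lub_corec_upper[OF \<open>le_bot_chain C\<close>] by blast
  moreover have "le_bot (lub_corec C) x" using x lub_corec_least[OF \<open>le_bot_chain C\<close>] by blast
  ultimately show "x = lub_corec C" by (rule le_bot_antisym)
qed

lemma lub_upper: "le_bot_chain C \<Longrightarrow> x \<in> C \<Longrightarrow> le_bot x (lub C)"
  by (simp add: lub_corec_upper lub_eq_lub_corec)

lemma lub_least: "le_bot_chain C \<Longrightarrow> \<forall>c\<in>C. le_bot c y \<Longrightarrow> le_bot (lub C) y"
  by (simp add: lub_corec_least lub_eq_lub_corec)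

lemma le_bot_chain_tail_glbs:
  fixes a :: "'i::linorder \<Rightarrow> ('f, 'v) pterm"
  shows "le_bot_chain {glb {a i | i. b \<le> i \<and> i < l} | b. b < l}"
proof -
  have mono: "le_bot (glb {a i | i. b \<le> i \<and> i < l}) (glb {a i | i. c \<le> i \<and> i < l})"
    if "b \<le> c" "c < l" for b c
  proof (rule glb_greatest)
    show "{a i | i. c \<le> i \<and> i < l} \<noteq> {}" using \<open>c < l\<close> by blast
    show "\<forall>x\<in>{a i | i. c \<le> i \<and> i < l}. le_bot (glb {a i | i. b \<le> i \<and> i < l}) x"
    proof clarify
      fix i assume "c \<le> i" "i < l"
      then have "a i \<in> {a i | i. b \<le> i \<and> i < l}" using \<open>b \<le> c\<close> by auto
      then show "le_bot (glb {a i | i. b \<le> i \<and> i < l}) (a i)" by (rule glb_lower)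
    qed
  qed
  show ?thesis
    unfolding le_bot_chain_def
  proof (intro ballI)
    fix x y assume "x \<in> {glb {a i | i. b \<le> i \<and> i < l} | b. b < l}"
      and "y \<in> {glb {a i | i. b \<le> i \<and> i < l} | b. b < l}"
    then obtain b c where "x = glb {a i | i. b \<le> i \<and> i < l}" "b < l"
      and "y = glb {a i | i. c \<le> i \<and> i < l}" "c < l" by blast
    then show "le_bot x y \<or> le_bot y x" using mono linorder_le_cases[of b c] by blast
  qed
qed

lemma liminf_mono:
  fixes a b :: "'i::wellorder \<Rightarrow> ('f, 'v) pterm"
  assumes "\<And>i. i < l \<Longrightarrow> le_bot (a i) (b i)"
  shows "le_bot (liminf_at a l) (liminf_at b l)"
  unfolding liminf_at_def
proof (rule lub_least[OF le_bot_chain_tail_glbs], clarify)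
  fix c assume c: "c < l"
  have "le_bot (glb {a i | i. c \<le> i \<and> i < l}) (glb {b i | i. c \<le> i \<and> i < l})"
  proof (rule glb_greatest, use c in blast, clarify)
    fix i assume "c \<le> i" "i < l"
    then have "le_bot (glb {a i | i. c \<le> i \<and> i < l}) (a i)" by (intro glb_lower) blast
    then show "le_bot (glb {a i | i. c \<le> i \<and> i < l}) (b i)"
      using assms[OF \<open>i < l\<close>] by (rule le_bot_trans)
  qed
  also have "le_bot \<dots> (lub {glb {b i | i. d \<le> i \<and> i < l} | d. d < l})"
    using c by (intro lub_upper[OF le_bot_chain_tail_glbs]) blast
  finally show "le_bot (glb {a i | i. c \<le> i \<and> i < l}) (lub {glb {b i | i. d \<le> i \<and> i < l} | d. d < l})" .
qed

lemma liminf_cong: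
  fixes a b :: "'i::wellorder \<Rightarrow> ('f, 'v) pterm"
  assumes "\<And>i. i < l \<Longrightarrow> a i = b i"
  shows "liminf_at a l = liminf_at b l"
proof -
  have "{a i | i. c \<le> i \<and> i < l} = {b i | i. c \<le> i \<and> i < l}" for c
    using assms by (intro Collect_cong) metis
  then show ?thesis unfolding liminf_at_def by simp
qed

lemma repl_Bot_le_bot: "le_bot (repl t p PBot) t"
proof (induction p arbitrary: t)
  case Nil then show ?case by (simp add: le_bot.intros)
next
  case (Cons i p)
  show ?case
  proof (cases t)
    case (PFun f ts)
    show ?thesis
    proof (cases "i < length ts")
      case True
      have "list_all2 le_bot (ts[i := repl (ts ! i) p PBot]) ts"
      proof (rule list_all2_all_nthI)
        fix k assume "k < length (ts[i := repl (ts ! i) p PBot])"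
        then show "le_bot (ts[i := repl (ts ! i) p PBot] ! k) (ts ! k)"
          using Cons.IH le_bot_refl True by (cases "k = i") auto
      qed simp
      then show ?thesis using PFun True by (auto intro: le_bot.intros)
    qed (use PFun le_bot_refl in auto)
  qed (auto intro: le_bot_refl)
qed

lemma subt_le_bot:
  "subt t p = Some u \<Longrightarrow> le_bot t t' \<Longrightarrow> \<exists>u'. subt t' p = Some u' \<and> le_bot u u'"
proof (induction p arbitrary: t t')
  case (Cons i p)
  then obtain f ts where t: "t = PFun f ts" "i < length ts" "subt (ts ! i) p = Some u"
    by (auto split: pterm.splits if_splits)
  then obtain ts' where "t' = PFun f ts'" "list_all2 le_bot ts ts'"
    using Cons.prems(2) by (auto simp: le_bot_Fun_iff)
  moreover from this have "le_bot (ts ! i) (ts' ! i)" "i < length ts'"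
    using t(2) by (auto simp: list_all2_conv_all_nth)
  ultimately show ?case using Cons.IH[OF t(3)] by simp
qed simp

lemma repl_le_bot_mono:
  "subt t p \<noteq> None \<Longrightarrow> le_bot t t' \<Longrightarrow> le_bot v v' \<Longrightarrow> le_bot (repl t p v) (repl t' p v')"
proof (induction p arbitrary: t t')
  case (Cons i p)
  then obtain f ts where t: "t = PFun f ts" "i < length ts" "subt (ts ! i) p \<noteq> None"
    by (auto split: pterm.splits if_splits)
  then obtain ts' where t': "t' = PFun f ts'" "list_all2 le_bot ts ts'"
    using Cons.prems(2) by (auto simp: le_bot_Fun_iff)
  then have "le_bot (ts ! i) (ts' ! i)" and i': "i < length ts'"
    using t(2) by (auto simp: list_all2_conv_all_nth)
  then have "le_bot (repl (ts ! i) p v) (repl (ts' ! i) p v')"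
    using Cons.IH t(3) Cons.prems(3) by blast
  then have "list_all2 le_bot (ts[i := repl (ts ! i) p v]) (ts'[i := repl (ts' ! i) p v'])"
    using t'(2) by (simp add: list_all2_update_cong)
  then show ?case using t t' i' by (simp add: le_bot.intros)
qed simp

lemma subt_snoc: "subt t (p @ [i]) =
  (case subt t p of Some (PFun f ts) \<Rightarrow> if i < length ts then Some (ts ! i) else None | _ \<Rightarrow> None)"
  by (induction p arbitrary: t) (simp_all split: pterm.splits)

lemma subt_inst:
  "inst \<sigma> l u \<Longrightarrow> subt l p = Some l0 \<Longrightarrow> \<exists>u0. subt u p = Some u0 \<and> inst \<sigma> l0 u0"
proof (induction p arbitrary: l u)
  case (Cons i p)
  then obtain f ls where l: "l = PFun f ls" "i < length ls" "subt (ls ! i) p = Some l0"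
    by (auto split: pterm.splits if_splits)
  then obtain us where u: "u = PFun f us" "list_all2 (inst \<sigma>) ls us"
    using Cons.prems(1) by (auto elim: inst.cases)
  then have "inst \<sigma> (ls ! i) (us ! i)" "i < length us"
    using l(2) by (auto simp: list_all2_conv_all_nth)
  then show ?case using Cons.IH[OF _ l(3)] u by simp
qed simp

lemma vars_arg_subset: "i < length ls \<Longrightarrow> vars (ls ! i) \<subseteq> vars (PFun f ls)"
proof
  fix x assume "i < length ls" "x \<in> vars (ls ! i)"
  then obtain p where "subt (ls ! i) p = Some (PVar x)" unfolding vars_def by blast
  then have "subt (PFun f ls) (i # p) = Some (PVar x)" using \<open>i < length ls\<close> by simp
  then show "x \<in> vars (PFun f ls)" unfolding vars_def by blast
qed

text \<open>For a linear \<open>l\<close> every variable occurs at a single position, so reading off \<open>u\<close>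
  at that position gives the matching substitution.\<close>
definition matcher :: "('f, 'v) pterm \<Rightarrow> ('f, 'v) pterm \<Rightarrow> 'v \<Rightarrow> ('f, 'v) pterm" where
  "matcher l u x = the (subt u (SOME p. subt l p = Some (PVar x)))"

lemma matcher_at:
  assumes "linear l" and "subt l p = Some (PVar x)" and "subt u p = Some w"
  shows "matcher l u x = w"
proof -
  have "subt l (SOME p. subt l p = Some (PVar x)) = Some (PVar x)"
    using assms(2) by (rule someI)
  then have "(SOME p. subt l p = Some (PVar x)) = p"
    using assms(1,2) unfolding linear_def by blast
  then show ?thesis using assms(3) unfolding matcher_def by simp
qed

lemma inst_matcher:
  assumes lin: "linear l" and "inst \<sigma> l u" and "le_bot u u'"
  shows "inst (matcher l u') l u'"
proof -
  have "inst (matcher l u') l1 v1"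
    if "\<exists>p u0. subt l p = Some l1 \<and> subt u p = Some u0 \<and> subt u' p = Some v1
      \<and> inst \<sigma> l1 u0 \<and> le_bot u0 v1" for l1 v1
    using that
  proof (coinduction arbitrary: l1 v1 rule: inst.coinduct)
    case (inst l1 v1)
    then obtain p u0 where h: "subt l p = Some l1" "subt u p = Some u0" "subt u' p = Some v1"
      "inst \<sigma> l1 u0" "le_bot u0 v1" by blast
    show ?case
    proof (cases l1)
      case (PVar x)
      then show ?thesis using matcher_at[OF lin] h by auto
    next
      case PBot then show ?thesis using h(4) by (auto elim: inst.cases)
    next
      case (PFun f ls)
      then obtain us where us: "u0 = PFun f us" "list_all2 (inst \<sigma>) ls us"
        using h(4) by (auto elim: inst.cases)
      then obtain vs where vs: "v1 = PFun f vs" "list_all2 le_bot us vs"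
        using h(5) by (auto simp: le_bot_Fun_iff)
      have len: "length ls = length us" "length us = length vs"
        using us(2) vs(2) by (auto dest: list_all2_lengthD)
      have "list_all2 (\<lambda>a b. \<exists>p u0. subt l p = Some a \<and> subt u p = Some u0 \<and> subt u' p = Some b
          \<and> inst \<sigma> a u0 \<and> le_bot u0 b) ls vs"
      proof (rule list_all2_all_nthI)
        fix i assume i: "i < length ls"
        have "subt l (p @ [i]) = Some (ls ! i)" using h(1) PFun i by (simp add: subt_snoc)
        moreover have "subt u (p @ [i]) = Some (us ! i)" using h(2) us(1) i len by (simp add: subt_snoc)
        moreover have "subt u' (p @ [i]) = Some (vs ! i)" using h(3) vs(1) i len by (simp add: subt_snoc)
        moreover have "inst \<sigma> (ls ! i) (us ! i)" using us(2) i by (simp add: list_all2_conv_all_nth)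
        moreover have "le_bot (us ! i) (vs ! i)" using vs(2) i len by (simp add: list_all2_conv_all_nth)
        ultimately show "\<exists>p u0. subt l p = Some (ls ! i) \<and> subt u p = Some u0 \<and> subt u' p = Some (vs ! i)
            \<and> inst \<sigma> (ls ! i) u0 \<and> le_bot u0 (vs ! i)"
          by blast
      qed (use len in simp)
      then show ?thesis using PFun vs(1) by (auto elim!: list_all2_mono)
    qed
  qed
  then show ?thesis using assms(2,3) by (metis subt.simps(1))
qed

lemma le_bot_matcher:
  assumes "linear l" and "inst \<sigma> l u" and "le_bot u u'" and "x \<in> vars l"
  shows "le_bot (\<sigma> x) (matcher l u' x)"
proof -
  obtain p where p: "subt l p = Some (PVar x)" using assms(4) unfolding vars_def by blast
  obtain u0 where u0: "subt u p = Some u0" "inst \<sigma> (PVar x) u0"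
    using subt_inst[OF assms(2) p] by blast
  obtain u1 where u1: "subt u' p = Some u1" "le_bot u0 u1"
    using subt_le_bot[OF u0(1) assms(3)] by blast
  have "u0 = \<sigma> x" using u0(2) by (auto elim: inst.cases)
  then show ?thesis using matcher_at[OF assms(1) p u1(1)] u1(2) by simp
qed

text \<open>Substitution on infinite terms: on \<open>Inl t\<close> the substitution is applied to \<open>t\<close>, while
  \<open>Inr t\<close> copies \<open>t\<close>; the copying mode lets the corecursion continue through \<open>\<sigma> x\<close>.\<close>
primcorec subst_or_copy :: "('v \<Rightarrow> ('f, 'v) pterm) \<Rightarrow> ('f, 'v) pterm + ('f, 'v) pterm \<Rightarrow> ('f, 'v) pterm"
  where
  "subst_or_copy \<sigma> z = (case z of
      Inl (PVar x) \<Rightarrow> (case \<sigma> x of PVar y \<Rightarrow> PVar y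
          | PFun f ts \<Rightarrow> PFun f (map (\<lambda>t. subst_or_copy \<sigma> (Inr t)) ts) | PBot \<Rightarrow> PBot)
    | Inl (PFun f ts) \<Rightarrow> PFun f (map (\<lambda>t. subst_or_copy \<sigma> (Inl t)) ts)
    | Inl PBot \<Rightarrow> PBot
    | Inr (PVar y) \<Rightarrow> PVar y
    | Inr (PFun f ts) \<Rightarrow> PFun f (map (\<lambda>t. subst_or_copy \<sigma> (Inr t)) ts)
    | Inr PBot \<Rightarrow> PBot)"

definition apply_subst :: "('v \<Rightarrow> ('f, 'v) pterm) \<Rightarrow> ('f, 'v) pterm \<Rightarrow> ('f, 'v) pterm" where
  "apply_subst \<sigma> t = subst_or_copy \<sigma> (Inl t)"

lemma subst_or_copy_Inr: "subst_or_copy \<sigma> (Inr t) = t"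
proof -
  have "a = b" if "a = subst_or_copy \<sigma> (Inr b)" for a b
    using that
  proof (coinduction arbitrary: a b rule: pterm.coinduct)
    case (Eq_pterm a b)
    then show ?case
      by (cases b) (auto simp: subst_or_copy.code[of \<sigma> "Inr b"] list.rel_map intro!: list.rel_refl)
  qed
  then show ?thesis by simp
qed

lemma apply_subst_Var: "apply_subst \<sigma> (PVar x) = \<sigma> x"
  unfolding apply_subst_def
  by (cases "\<sigma> x") (simp_all add: subst_or_copy.code[of \<sigma> "Inl (PVar x)"] subst_or_copy_Inr)

lemma apply_subst_Fun: "apply_subst \<sigma> (PFun f ts) = PFun f (map (apply_subst \<sigma>) ts)"
  unfolding apply_subst_def by (simp add: subst_or_copy.code[of \<sigma> "Inl (PFun f ts)"])

lemma inst_apply_subst: "inst \<sigma> r v \<Longrightarrow> inst \<sigma>' r (apply_subst \<sigma>' r)"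
proof (coinduction arbitrary: r v rule: inst.coinduct)
  case (inst r v)
  show ?case
  proof (cases r)
    case (PVar x) then show ?thesis by (simp add: apply_subst_Var)
  next
    case PBot then show ?thesis using inst by (auto elim: inst.cases)
  next
    case (PFun f ls)
    then obtain vs where "list_all2 (inst \<sigma>) ls vs" using inst by (auto elim: inst.cases)
    then have "list_all2 (\<lambda>a b. \<exists>v. b = apply_subst \<sigma>' a \<and> inst \<sigma> a v) ls (map (apply_subst \<sigma>') ls)"
      by (auto simp: list_all2_conv_all_nth)
    then show ?thesis using PFun by (auto simp: apply_subst_Fun elim!: list_all2_mono)
  qed
qed

lemma le_bot_apply_subst:
  "inst \<sigma> r v \<Longrightarrow> \<forall>x\<in>vars r. le_bot (\<sigma> x) (\<sigma>' x) \<Longrightarrow> le_bot v (apply_subst \<sigma>' r)"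
proof (coinduction arbitrary: r v rule: le_bot.coinduct)
  case (le_bot r v)
  show ?case
  proof (cases r)
    case (PVar x)
    then have "v = \<sigma> x" using le_bot(1) by (auto elim: inst.cases)
    moreover have "x \<in> vars r"
      using PVar unfolding vars_def by (intro CollectI exI[of _ "[]"]) simp
    ultimately have "le_bot v (apply_subst \<sigma>' r)"
      using le_bot(2) PVar by (simp add: apply_subst_Var)
    then show ?thesis by (cases rule: le_bot.cases) (auto elim!: list_all2_mono)
  next
    case PBot then show ?thesis using le_bot(1) by (auto elim: inst.cases)
  next
    case (PFun f ls)
    then obtain vs where vs: "v = PFun f vs" "list_all2 (inst \<sigma>) ls vs"
      using le_bot(1) by (auto elim: inst.cases)
    have "list_all2 (\<lambda>a b. \<exists>r. a \<in> {a. inst \<sigma> r a} \<and> b = apply_subst \<sigma>' r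
        \<and> (\<forall>x\<in>vars r. le_bot (\<sigma> x) (\<sigma>' x))) vs (map (apply_subst \<sigma>') ls)"
    proof (rule list_all2_all_nthI)
      fix i assume "i < length vs"
      then have i: "i < length ls" using vs(2) by (simp add: list_all2_lengthD)
      have "inst \<sigma> (ls ! i) (vs ! i)" using vs(2) i by (simp add: list_all2_conv_all_nth)
      moreover have "\<forall>x\<in>vars (ls ! i). le_bot (\<sigma> x) (\<sigma>' x)"
        using le_bot(2) vars_arg_subset[OF i, of f] PFun by blast
      ultimately show "\<exists>r. vs ! i \<in> {a. inst \<sigma> r a} \<and> map (apply_subst \<sigma>') ls ! i = apply_subst \<sigma>' r
          \<and> (\<forall>x\<in>vars r. le_bot (\<sigma> x) (\<sigma>' x))"
        using i by (intro exI[of _ "ls ! i"]) simp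
    qed (use vs(2) in \<open>simp add: list_all2_lengthD\<close>)
    then show ?thesis using PFun vs(1) by (auto simp: apply_subst_Fun elim!: list_all2_mono)
  qed
qed

lemma rstep_le_bot_lift:
  assumes "trs R" and "left_linear R" and "rstep R t \<pi> t1" and "le_bot t t'"
  shows "\<exists>t1'. rstep R t' \<pi> t1' \<and> le_bot t1 t1'"
proof -
  obtain l r \<sigma> u v where lr: "(l, r) \<in> R" and u: "subt t \<pi> = Some u" "inst \<sigma> l u"
    and v: "inst \<sigma> r v" and t1: "t1 = repl t \<pi> v"
    using assms(3) unfolding rstep_def by blast
  have lin: "linear l" using assms(2) lr unfolding left_linear_def by blast
  have vars_r: "vars r \<subseteq> vars l" using assms(1) lr unfolding trs_def by blast
  obtain u' where u': "subt t' \<pi> = Some u'" "le_bot u u'"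
    using subt_le_bot[OF u(1) assms(4)] by blast
  define \<sigma>' where "\<sigma>' = matcher l u'"
  have "\<forall>x\<in>vars r. le_bot (\<sigma> x) (\<sigma>' x)"
    using le_bot_matcher[OF lin u(2) u'(2)] vars_r unfolding \<sigma>'_def by blast
  then have "le_bot t1 (repl t' \<pi> (apply_subst \<sigma>' r))"
    unfolding t1 using u(1) assms(4) le_bot_apply_subst[OF v] by (intro repl_le_bot_mono) auto
  moreover have "rstep R t' \<pi> (repl t' \<pi> (apply_subst \<sigma>' r))"
    unfolding rstep_def \<sigma>'_def
    using lr u'(1) inst_matcher[OF lin u(2) u'(2)] inst_apply_subst[OF v] by blast
  ultimately show ?thesis by blast
qed

lemma idx0_le: "idx0 \<le> (i::'i::wellorder)"
  unfolding idx0_def by (rule Least_le) simp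

lemma isucc_gt: "(i::'i::wellorder) < k \<Longrightarrow> i < isucc i"
  unfolding isucc_def by (rule LeastI)

lemma isucc_le: "(i::'i::wellorder) < k \<Longrightarrow> isucc i \<le> k"
  unfolding isucc_def by (rule Least_le)

lemma limit_not_isucc: "is_limit (i::'i::wellorder) \<Longrightarrow> j < i \<Longrightarrow> i \<noteq> isucc j"
  using isucc_le unfolding is_limit_def by (metis leD)

lemma index_cases:
  fixes i :: "'i::wellorder"
  obtains "i = idx0" | "is_limit i" | j where "j < i" "i = isucc j"
proof -
  consider "i = idx0" | "is_limit i" | b where "b < i" "\<not> (\<exists>c. b < c \<and> c < i)"
    unfolding is_limit_def by blast
  then show ?thesis
  proof cases
    case (3 b)
    have "isucc b \<le> i" "b < isucc b" using \<open>b < i\<close> by (rule isucc_le, rule isucc_gt)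
    then have "isucc b = i" using 3 by (metis order_le_less)
    then show ?thesis using that \<open>b < i\<close> by blast
  qed (use that in auto)
qed

definition ipred :: "'i::wellorder \<Rightarrow> 'i" where
  "ipred i = (THE j. j < i \<and> i = isucc j)"

lemma ipred_isucc: "(j::'i::wellorder) < isucc j \<Longrightarrow> ipred (isucc j) = j"
  unfolding ipred_def
proof (rule the_equality)
  fix k assume j: "j < isucc j" and k: "k < isucc j \<and> isucc j = isucc k"
  have "\<not> k < j"
  proof
    assume "k < j"
    then have "isucc k \<le> j" by (rule isucc_le)
    then have "isucc j \<le> j" using k by simp
    then show False using j by simp
  qed
  moreover have "\<not> j < k"
  proof
    assume "j < k"
    then have "isucc j \<le> k" by (rule isucc_le)
    then show False using k leD by blast
  qed
  ultimately show "k = j" by simp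
qed simp

text \<open>The \<open>SOME\<close> only yields a genuine step while the lifted term lies above \<open>ts\<close>;
  this invariant is \<open>le_bot_lift_reduction\<close>.\<close>
definition lift_step :: "(('f, 'v) pterm \<times> ('f, 'v) pterm) set \<Rightarrow> ('i::wellorder \<Rightarrow> ('f, 'v) pterm)
    \<Rightarrow> ('i \<Rightarrow> pos) \<Rightarrow> ('i \<Rightarrow> ('f, 'v) pterm) \<Rightarrow> 'i \<Rightarrow> ('f, 'v) pterm" where
  "lift_step R ts ps T i =
     (if i = idx0 then ts idx0
      else if is_limit i then liminf_at T i
      else SOME u. rstep R (T (ipred i)) (ps (ipred i)) u \<and> le_bot (ts i) u)"

definition lift_reduction :: "(('f, 'v) pterm \<times> ('f, 'v) pterm) set \<Rightarrow> ('i::wellorder \<Rightarrow> ('f, 'v) pterm)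
    \<Rightarrow> ('i \<Rightarrow> pos) \<Rightarrow> 'i \<Rightarrow> ('f, 'v) pterm" where
  "lift_reduction R ts ps = wfrec {(j, i). j < i} (lift_step R ts ps)"

lemma lift_reduction_unfold:
  fixes i :: "'i::wellorder"
  shows "lift_reduction R ts ps i = lift_step R ts ps (lift_reduction R ts ps) i"
proof -
  let ?T = "lift_reduction R ts ps" and ?r = "{(j, i). j < i} :: ('i \<times> 'i) set"
  have cut_T: "cut ?T ?r i j = ?T j" if "j < i" for j
    using that by (simp add: cut_apply)
  have "?T i = lift_step R ts ps (cut ?T ?r i) i"
    unfolding lift_reduction_def by (rule wfrec) (use wf in simp)
  also have "\<dots> = lift_step R ts ps ?T i"
  proof (cases i rule: index_cases)
    case 2
    then show ?thesis using liminf_cong[OF cut_T] by (simp add: lift_step_def is_limit_def)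
  next
    case (3 j)
    moreover have "\<not> is_limit i" using limit_not_isucc 3 by blast
    ultimately show ?thesis using cut_T[OF 3(1)] by (simp add: lift_step_def ipred_isucc)
  qed (simp add: lift_step_def)
  finally show ?thesis .
qed

lemma lift_reduction_idx0: "lift_reduction R ts ps idx0 = ts idx0"
  by (subst lift_reduction_unfold) (simp add: lift_step_def)

lemma lift_reduction_limit:
  "is_limit i \<Longrightarrow> lift_reduction R ts ps i = liminf_at (lift_reduction R ts ps) i"
  by (subst lift_reduction_unfold) (simp add: lift_step_def is_limit_def)

lemma lift_reduction_isucc:
  assumes "j < isucc j"
  shows "lift_reduction R ts ps (isucc j)
    = (SOME u. rstep R (lift_reduction R ts ps j) (ps j) u \<and> le_bot (ts (isucc j)) u)"
proof -
  have "isucc j \<noteq> idx0" using assms idx0_le[of j] by auto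
  moreover have "\<not> is_limit (isucc j)" using limit_not_isucc assms by blast
  ultimately show ?thesis by (subst lift_reduction_unfold) (simp add: lift_step_def ipred_isucc[OF assms])
qed

lemma lift_reduction_step:
  assumes "trs R" and "left_linear R" and "rstep R (ts j) (ps j) (ts (isucc j))"
    and "le_bot (ts j) (lift_reduction R ts ps j)" and "j < isucc j"
  shows "rstep R (lift_reduction R ts ps j) (ps j) (lift_reduction R ts ps (isucc j))"
    and "le_bot (ts (isucc j)) (lift_reduction R ts ps (isucc j))"
proof -
  have "\<exists>u. rstep R (lift_reduction R ts ps j) (ps j) u \<and> le_bot (ts (isucc j)) u"
    using rstep_le_bot_lift[OF assms(1-4)] .
  from someI_ex[OF this] show "rstep R (lift_reduction R ts ps j) (ps j) (lift_reduction R ts ps (isucc j))"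
    and "le_bot (ts (isucc j)) (lift_reduction R ts ps (isucc j))"
    unfolding lift_reduction_isucc[OF assms(5)] by blast+
qed

text \<open>The hypothesis on limit ordinals is what strong convergence provides.\<close>
lemma le_bot_lift_reduction:
  assumes "trs R" and "left_linear R" and red: "reduction R \<alpha> ts ps"
    and lim: "\<And>l. l < \<alpha> \<Longrightarrow> is_limit l \<Longrightarrow> le_bot (ts l) (liminf_at ts l)"
    and "i < \<alpha> \<or> (i = \<alpha> \<and> \<not> is_limit \<alpha>)"
  shows "le_bot (ts i) (lift_reduction R ts ps i)"
  using assms(5)
proof (induction i rule: less_induct)
  case (less i)
  show ?case
  proof (cases i rule: index_cases)
    case 1 then show ?thesis by (simp add: lift_reduction_idx0 le_bot_refl)
  next
    case 2
    then have "i < \<alpha>" using less.prems by auto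
    have "le_bot (ts k) (lift_reduction R ts ps k)" if "k < i" for k
    proof -
      have "k < \<alpha>" using that \<open>i < \<alpha>\<close> by (rule order.strict_trans)
      then show ?thesis using less.IH[OF that] by blast
    qed
    then have "le_bot (liminf_at ts i) (liminf_at (lift_reduction R ts ps) i)"
      by (rule liminf_mono)
    then show ?thesis
      using lim[OF \<open>i < \<alpha>\<close> 2] lift_reduction_limit[OF 2] le_bot_trans by metis
  next
    case (3 j)
    then have "j < \<alpha>" using less.prems by auto
    then have "rstep R (ts j) (ps j) (ts i)" using red 3(2) unfolding reduction_def by simp
    moreover have "le_bot (ts j) (lift_reduction R ts ps j)" using less.IH 3(1) \<open>j < \<alpha>\<close> by blast
    ultimately show ?thesis using lift_reduction_step(2)[OF assms(1,2)] 3 by blast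
  qed
qed

lemma reduction_lift_reduction:
  assumes "trs R" and "left_linear R" and "reduction R \<alpha> ts ps"
    and "\<And>l. l < \<alpha> \<Longrightarrow> is_limit l \<Longrightarrow> le_bot (ts l) (liminf_at ts l)"
  shows "reduction R \<alpha> (lift_reduction R ts ps) ps"
  unfolding reduction_def
proof (intro allI impI)
  fix i assume "i < \<alpha>"
  then have "rstep R (ts i) (ps i) (ts (isucc i))"
    using assms(3) unfolding reduction_def by simp
  moreover have "le_bot (ts i) (lift_reduction R ts ps i)"
    using le_bot_lift_reduction[OF assms] \<open>i < \<alpha>\<close> by blast
  ultimately show "rstep R (lift_reduction R ts ps i) (ps i) (lift_reduction R ts ps (isucc i))"
    using lift_reduction_step(1)[OF assms(1,2)] isucc_gt[OF \<open>i < \<alpha>\<close>] by blast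
qed

lemma strong_conv_le_bot_liminf:
  assumes "strong_conv \<alpha> ts ps t" and "l < \<alpha>" and "is_limit l"
  shows "le_bot (ts l) (liminf_at ts l)"
proof -
  have "ts l = liminf_at (\<lambda>i. repl (ts i) (ps i) PBot) l"
    using assms unfolding strong_conv_def by simp
  also have "le_bot \<dots> (liminf_at ts l)"
    by (rule liminf_mono) (rule repl_Bot_le_bot)
  finally show ?thesis .
qed

theorem proposition3p7:
  fixes R :: "(('f, 'v) pterm \<times> ('f, 'v) pterm) set" and s t :: "('f, 'v) pterm"
  assumes "trs R" and "left_linear R"
    and "strongly_p_converges R TYPE('i::wellorder) s t"
  shows "\<exists>t'. le_bot t t' \<and> weakly_p_converges R TYPE('i) s t'"
proof -
  from assms(3) obtain \<alpha> :: 'i and ts ps where red: "reduction R \<alpha> ts ps" and "ts idx0 = s"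
    and conv: "strong_conv \<alpha> ts ps t" unfolding strongly_p_converges_def by blast
  define cs where "cs = (\<lambda>i. repl (ts i) (ps i) PBot)"
  have cs_le: "le_bot (cs i) (ts i)" for i unfolding cs_def by (rule repl_Bot_le_bot)
  note lim = strong_conv_le_bot_liminf[OF conv]
  define T where "T = lift_reduction R ts ps"
  define t' where "t' = (if is_limit \<alpha> then liminf_at T \<alpha> else T \<alpha>)"
  have le_T: "le_bot (ts i) (T i)" if "i < \<alpha> \<or> (i = \<alpha> \<and> \<not> is_limit \<alpha>)" for i
    using le_bot_lift_reduction[OF assms(1,2) red lim that] unfolding T_def .
  have "le_bot t t'"
  proof (cases "is_limit \<alpha>")
    case True
    have "le_bot (cs k) (T k)" if "k < \<alpha>" for k using le_bot_trans[OF cs_le le_T] that by blast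
    then have "le_bot (liminf_at cs \<alpha>) (liminf_at T \<alpha>)" by (rule liminf_mono)
    then show ?thesis using conv True unfolding strong_conv_def cs_def t'_def by simp
  qed (use conv le_T in \<open>simp add: strong_conv_def t'_def\<close>)
  moreover have "reduction R \<alpha> T ps"
    unfolding T_def using assms(1,2) red lim by (rule reduction_lift_reduction)
  moreover have "weak_conv \<alpha> T t'"
    unfolding weak_conv_def t'_def T_def by (simp add: lift_reduction_limit)
  ultimately show ?thesis
    unfolding weakly_p_converges_def using \<open>ts idx0 = s\<close> lift_reduction_idx0 T_def by blast
qed

end
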